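(* Fix an integer $k\ge1$. Let $G$ be the directed graph with vertices $v_{i,p}$ for $i\in\{1,2,3,\dots\}$ and $p\in\{1,\dots,k\}$, with an edge from $v_{i,p}$ to $v_{j,q}$ if and only if $j=i+1$ and $|p-q|\le1$, and with birthdates $t(v_{i,p})=i$. Then $(G,t)$ is an infinite biosphere, and $G$ has exactly $k$ distinct $\mathrm{IAP}\cap\mathrm{CONV}\cap\mathrm{CA}\cap\mathrm{REF}$-maximal sets, namely the sets $S_\ell=\{v_{1,\ell}\}\cup\{w: w \text{ is a descendant of } v_{1,\ell}\}$ for $\ell\in\{1,\dots,k\}$. Moreover $S_\ell\sim S_m$ for all $\ell,m\in\{1,\dots,k\}$.
   Context: An infinite biosphere is a directed graph $G$ together with a function $t$ assigning a real number $t(v)$ to each vertex, such that: (1) if $v$ is a parent of $w$ (edge from $v$ to $w$) then $t(v)<t(w)$; (2) for every $r\in\mathbb R$ at most finitely many vertices $v$ have $t(v)<r$; (3) every vertex has finitely many children; (4) $G$ is infinite. $v$ is an ancestor of $w$ (and $w$ a descendant of $v$) if there is a directed path $v=v_1,\dots,v_n=w$ with $n>1$. $\mathrm{IAP}$: sets $S$ of vertices such that no $v\in S$ has both infinitely many descendants in $S$ and infinitely many non-descendants in $S$. $\mathrm{CONV}$: sets $S$ such that every vertex having an ancestor in $S$ and a descendant in $S$ lies in $S$. $\mathrm{CA}$: sets $S$ for which there exists $v\in S$ such that every $w\in S$ with $w\neq v$ is a descendant of $v$. $\mathrm{REF}$: sets $S$ such that every $v\in S$ with infinitely many descendants in $G$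 has infinitely many descendants in $S$. An $\mathrm{IAP}\cap\mathrm{CONV}\cap\mathrm{CA}\cap\mathrm{REF}$-maximal set is a nonempty set in $\mathrm{IAP}\cap\mathrm{CONV}\cap\mathrm{CA}\cap\mathrm{REF}$ no proper superset of which lies in $\mathrm{IAP}\cap\mathrm{CONV}\cap\mathrm{CA}\cap\mathrm{REF}$. For $S\subseteq G$, a vertex $v\in S$ is a generator of $S$ if $S$ contains at most finitely many non-descendants of $v$; $\mathrm{gen}(S)$ is the set of generators. For infinite $S_1,S_2\subseteq G$, $S_1\sim S_2$ means the symmetric difference $\mathrm{gen}(S_1)\triangle\mathrm{gen}(S_2)$ is finite. *)

theory Defs
  imports Complex_Main
begin

text \<open>A directed graph is a vertex set V with an edge relation E (E v w: edge from v to w,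
  i.e. v is a parent of w). Birthdates t.\<close>

definition infinite_biosphere :: "'a set \<Rightarrow> ('a \<Rightarrow> 'a \<Rightarrow> bool) \<Rightarrow> ('a \<Rightarrow> real) \<Rightarrow> bool" where
  "infinite_biosphere V E t \<longleftrightarrow>
     (\<forall>v w. E v w \<longrightarrow> v \<in> V \<and> w \<in> V) \<and>
     (\<forall>v w. E v w \<longrightarrow> t v < t w) \<and>
     (\<forall>r::real. finite {v \<in> V. t v < r}) \<and>
     (\<forall>v \<in> V. finite {w. E v w}) \<and>
     infinite V"

definition desc :: "('a \<Rightarrow> 'a \<Rightarrow> bool) \<Rightarrow> 'a \<Rightarrow> 'a set" where
  "desc E v = {w. E\<^sup>+\<^sup>+ v w}"

definition IAP :: "('a \<Rightarrow> 'a \<Rightarrow> bool) \<Rightarrow> 'a set \<Rightarrow> bool" where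
  "IAP E S \<longleftrightarrow> (\<forall>v \<in> S. \<not> (infinite (S \<inter> desc E v) \<and> infinite (S - desc E v)))"

definition CONV :: "'a set \<Rightarrow> ('a \<Rightarrow> 'a \<Rightarrow> bool) \<Rightarrow> 'a set \<Rightarrow> bool" where
  "CONV V E S \<longleftrightarrow>
     (\<forall>u \<in> V. (\<exists>a \<in> S. u \<in> desc E a) \<and> (\<exists>d \<in> S. d \<in> desc E u) \<longrightarrow> u \<in> S)"

definition CA :: "('a \<Rightarrow> 'a \<Rightarrow> bool) \<Rightarrow> 'a set \<Rightarrow> bool" where
  "CA E S \<longleftrightarrow> (\<exists>v \<in> S. \<forall>w \<in> S. w \<noteq> v \<longrightarrow> w \<in> desc E v)"

definition REF :: "('a \<Rightarrow> 'a \<Rightarrow> bool) \<Rightarrow> 'a set \<Rightarrow> bool" where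
  "REF E S \<longleftrightarrow> (\<forall>v \<in> S. infinite (desc E v) \<longrightarrow> infinite (S \<inter> desc E v))"

definition good_set :: "'a set \<Rightarrow> ('a \<Rightarrow> 'a \<Rightarrow> bool) \<Rightarrow> 'a set \<Rightarrow> bool" where
  "good_set V E S \<longleftrightarrow> S \<subseteq> V \<and> IAP E S \<and> CONV V E S \<and> CA E S \<and> REF E S"

definition maximal_set :: "'a set \<Rightarrow> ('a \<Rightarrow> 'a \<Rightarrow> bool) \<Rightarrow> 'a set \<Rightarrow> bool" where
  "maximal_set V E S \<longleftrightarrow> S \<noteq> {} \<and> good_set V E S \<and>
     (\<forall>T. S \<subset> T \<and> T \<subseteq> V \<longrightarrow> \<not> good_set V E T)"

definition gen :: "('a \<Rightarrow> 'a \<Rightarrow> bool) \<Rightarrow> 'a set \<Rightarrow> 'a set" where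
  "gen E S = {v \<in> S. finite (S - desc E v)}"

definition sim :: "('a \<Rightarrow> 'a \<Rightarrow> bool) \<Rightarrow> 'a set \<Rightarrow> 'a set \<Rightarrow> bool" where
  "sim E S1 S2 \<longleftrightarrow> infinite S1 \<and> infinite S2 \<and>
     finite ((gen E S1 - gen E S2) \<union> (gen E S2 - gen E S1))"

definition strip_V :: "nat \<Rightarrow> (nat \<times> nat) set" where
  "strip_V k = {(i, p). 1 \<le> i \<and> 1 \<le> p \<and> p \<le> k}"

definition strip_E :: "nat \<Rightarrow> nat \<times> nat \<Rightarrow> nat \<times> nat \<Rightarrow> bool" where
  "strip_E k v w \<longleftrightarrow> v \<in> strip_V k \<and> w \<in> strip_V k \<and>
     fst w = fst v + 1 \<and> \<bar>int (snd v) - int (snd w)\<bar> \<le> 1"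

definition strip_t :: "nat \<times> nat \<Rightarrow> real" where
  "strip_t v = real (fst v)"

end

theory Submission
  imports Defs
begin

text \<open>In the strip every vertex has among its descendants all vertices at least k generations
  later. Hence a cone (a vertex together with its descendants) misses only finitely many vertices
  of the strip, and in particular of any other cone: every cone is good, equals its own set of
  generators, and any two cones are \<open>\<sim>\<close>-equivalent. By CA a good set lies in the cone of its
  root, so the maximal good sets are exactly the cones of the parentless vertices, which are the
  k vertices of the first row.\<close>

definition cone :: "('a \<Rightarrow> 'a \<Rightarrow> bool) \<Rightarrow> 'a \<Rightarrow> 'a set" where
  "cone E v = insert v (desc E v)"

lemma desc_edge: "E v w \<Longrightarrow> w \<in> desc E v"
  by (simp add: desc_def)

lemma desc_trans: "w \<in> desc E v \<Longrightarrow> u \<in> desc E w \<Longrightarrow> u \<in> desc E v"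
  by (auto simp: desc_def intro: tranclp_trans)

lemma desc_has_parent: "w \<in> desc E v \<Longrightarrow> \<exists>u. E u w"
  unfolding desc_def by (auto elim: tranclp.cases)

lemma desc_subset_cone: "u \<in> cone E v \<Longrightarrow> desc E u \<subseteq> cone E v"
  unfolding cone_def using desc_trans by fastforce

lemma CA_imp_subset_cone: "CA E S \<Longrightarrow> \<exists>r \<in> S. S \<subseteq> cone E r"
  unfolding CA_def cone_def by blast

locale cofinite_desc_graph =
  fixes V :: "'a set" and E :: "'a \<Rightarrow> 'a \<Rightarrow> bool"
  assumes edge_in_V: "E v w \<Longrightarrow> v \<in> V \<and> w \<in> V"
    and acyclic: "v \<notin> desc E v"
    and finite_V_diff_desc: "u \<in> V \<Longrightarrow> finite (V - desc E u)"
    and infinite_V: "infinite V"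
begin

lemma desc_subset_V: "desc E v \<subseteq> V"
  unfolding desc_def by (auto elim: tranclp.cases dest: edge_in_V)

lemma cone_subset_V: "v \<in> V \<Longrightarrow> cone E v \<subseteq> V"
  using desc_subset_V by (auto simp: cone_def)

lemma finite_cone_diff_desc: "v \<in> V \<Longrightarrow> u \<in> V \<Longrightarrow> finite (cone E v - desc E u)"
  by (rule finite_subset[OF _ finite_V_diff_desc[of u]]) (use cone_subset_V in auto)

lemma good_set_cone:
  assumes v: "v \<in> V" shows "good_set V E (cone E v)"
  unfolding good_set_def
proof (intro conjI)
  show "cone E v \<subseteq> V" using cone_subset_V v .
  show "IAP E (cone E v)"
    unfolding IAP_def using finite_cone_diff_desc[OF v] cone_subset_V[OF v] by (meson subsetD)
  show "CONV V E (cone E v)"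
    unfolding CONV_def using desc_subset_cone by (meson subsetD)
  show "CA E (cone E v)" by (auto simp: CA_def cone_def)
  show "REF E (cone E v)"
    unfolding REF_def by (simp add: Int_absorb1 desc_subset_cone)
qed

lemma maximal_set_imp_cone_of_parentless:
  assumes "maximal_set V E T" shows "\<exists>r \<in> V. (\<nexists>u. E u r) \<and> T = cone E r"
proof -
  have good: "good_set V E T"
    and no_good_superset: "\<And>T'. T \<subset> T' \<Longrightarrow> T' \<subseteq> V \<Longrightarrow> \<not> good_set V E T'"
    using assms unfolding maximal_set_def by blast+
  obtain r where r: "r \<in> T" "T \<subseteq> cone E r"
    using good CA_imp_subset_cone[of E T] unfolding good_set_def by blast
  have "r \<in> V" using r good unfolding good_set_def by blast
  have T: "T = cone E r"
  proof (rule ccontr)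
    assume "T \<noteq> cone E r"
    with r(2) have "T \<subset> cone E r" by (rule psubsetI)
    then show False
      using no_good_superset good_set_cone[OF \<open>r \<in> V\<close>] cone_subset_V[OF \<open>r \<in> V\<close>] by blast
  qed
  have "\<not> E u r" for u
  proof
    assume "E u r"
    then have "u \<in> V" using edge_in_V by blast
    have "r \<in> desc E u" using \<open>E u r\<close> by (rule desc_edge)
    then have "u \<notin> cone E r"
      using acyclic[of r] desc_trans[of u E r r] by (auto simp: cone_def)
    moreover have "cone E r \<subseteq> cone E u"
      using \<open>r \<in> desc E u\<close> desc_subset_cone[of r E u] by (auto simp: cone_def)
    ultimately have "T \<subset> cone E u" unfolding T cone_def by blast
    then show False
      using no_good_superset good_set_cone[OF \<open>u \<in> V\<close>] cone_subset_V[OF \<open>u \<in> V\<close>] by blast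
  qed
  then show ?thesis using \<open>r \<in> V\<close> T by blast
qed

lemma maximal_set_cone_of_parentless:
  assumes "r \<in> V" "\<nexists>u. E u r" shows "maximal_set V E (cone E r)"
proof -
  have "\<not> good_set V E T" if "cone E r \<subset> T" for T
  proof
    assume "good_set V E T"
    then obtain r' where r': "r' \<in> T" "T \<subseteq> cone E r'"
      using CA_imp_subset_cone[of E T] unfolding good_set_def by blast
    have "r \<in> T" using that by (auto simp: cone_def)
    moreover have "r \<notin> desc E r'" using assms(2) desc_has_parent[of r E r'] by blast
    ultimately have "r' = r" using r'(2) by (auto simp: cone_def)
    then show False using that r'(2) by blast
  qed
  moreover have "cone E r \<noteq> {}" by (simp add: cone_def)
  ultimately show ?thesis
    unfolding maximal_set_def using good_set_cone[OF assms(1)] by blast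
qed

lemma maximal_set_iff_cone_of_parentless:
  "maximal_set V E T \<longleftrightarrow> (\<exists>r \<in> V. (\<nexists>u. E u r) \<and> T = cone E r)"
  using maximal_set_imp_cone_of_parentless maximal_set_cone_of_parentless by blast

lemma inj_cone: "inj (cone E)"
proof (rule injI)
  fix v w assume "cone E v = cone E w"
  then have "v \<in> cone E w" "w \<in> cone E v" by (metis cone_def insertI1)+
  then show "v = w" using acyclic[of v] desc_trans[of w E v v] by (auto simp: cone_def)
qed

lemma gen_cone: "v \<in> V \<Longrightarrow> gen E (cone E v) = cone E v"
  using finite_cone_diff_desc cone_subset_V by (auto simp: gen_def)

lemma infinite_cone:
  assumes "v \<in> V" shows "infinite (cone E v)"
proof
  assume "finite (cone E v)"
  then have "finite ((V - desc E v) \<union> cone E v)"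
    using finite_V_diff_desc[OF assms] by blast
  moreover have "V \<subseteq> (V - desc E v) \<union> cone E v" by (auto simp: cone_def)
  ultimately show False using infinite_V finite_subset by blast
qed

lemma sim_cone:
  assumes "v \<in> V" "w \<in> V" shows "sim E (cone E v) (cone E w)"
proof -
  have "finite (cone E a - cone E b)" if "a \<in> V" "b \<in> V" for a b
    using finite_cone_diff_desc[OF that] by (rule finite_subset[rotated]) (auto simp: cone_def)
  then show ?thesis
    using assms by (simp add: sim_def gen_cone infinite_cone)
qed

end

lemma strip_desc_fst_less:
  assumes "w \<in> desc (strip_E k) v" shows "fst v < fst w"
proof -
  have "(strip_E k)\<^sup>+\<^sup>+ v w" using assms by (simp add: desc_def)
  then show ?thesis by (induction rule: tranclp_induct) (auto simp: strip_E_def)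
qed

lemma strip_desc_if_column_gap_le:
  assumes "(i, p) \<in> strip_V k" "(i + Suc d, q) \<in> strip_V k"
    and "\<bar>int q - int p\<bar> \<le> int (Suc d)"
  shows "(i + Suc d, q) \<in> desc (strip_E k) (i, p)"
  using assms
proof (induction d arbitrary: i p)
  case 0
  then show ?case by (auto simp: desc_def strip_E_def)
next
  case (Suc d)
  define p' where "p' = (if p < q then p + 1 else if q < p then p - 1 else p)"
  have "(Suc i, p') \<in> strip_V k"
    using Suc.prems by (auto simp: strip_V_def p'_def)
  then have "strip_E k (i, p) (Suc i, p')"
    using Suc.prems by (auto simp: strip_E_def p'_def)
  moreover have "(Suc i + Suc d, q) \<in> desc (strip_E k) (Suc i, p')"
    using \<open>(Suc i, p') \<in> strip_V k\<close> Suc.prems by (intro Suc.IH) (auto simp: p'_def)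
  ultimately show ?case using desc_edge desc_trans by fastforce
qed

lemma strip_desc_if_far:
  assumes "v \<in> strip_V k" "w \<in> strip_V k" "fst v + k \<le> fst w"
  shows "w \<in> desc (strip_E k) v"
proof -
  obtain i p j q where v: "v = (i, p)" and w: "w = (j, q)" by force
  have "1 \<le> k" using assms(1) by (auto simp: strip_V_def)
  then have "i < j" using assms(3) v w by simp
  then obtain d where j: "j = i + Suc d" by (auto dest: less_imp_Suc_add)
  have "\<bar>int q - int p\<bar> \<le> int (Suc d)"
    using assms v w j by (auto simp: strip_V_def)
  then show ?thesis
    using strip_desc_if_column_gap_le assms v w j by blast
qed

lemma finite_strip_rows: "finite {w \<in> strip_V k. fst w < n}"
  by (rule finite_subset[of _ "{..<n} \<times> {..k}"]) (auto simp: strip_V_def)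

lemma finite_strip_V_diff_desc:
  assumes "u \<in> strip_V k" shows "finite (strip_V k - desc (strip_E k) u)"
proof -
  have "strip_V k - desc (strip_E k) u \<subseteq> {w \<in> strip_V k. fst w < fst u + k}"
    using strip_desc_if_far[OF assms] by fastforce
  then show ?thesis using finite_strip_rows finite_subset by blast
qed

lemma infinite_strip_V:
  assumes "1 \<le> k" shows "infinite (strip_V k)"
proof
  assume "finite (strip_V k)"
  moreover have "range (\<lambda>n. (Suc n, 1)) \<subseteq> strip_V k"
    using assms by (auto simp: strip_V_def)
  ultimately have "finite (range (\<lambda>n. (Suc n, 1::nat)))"
    by (rule finite_subset[rotated])
  then show False by (auto dest: finite_imageD simp: inj_on_def)
qed

lemma strip_cofinite_desc_graph:
  "1 \<le> k \<Longrightarrow> cofinite_desc_graph (strip_V k) (strip_E k)"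
  by unfold_locales (auto simp: strip_E_def finite_strip_V_diff_desc infinite_strip_V dest: strip_desc_fst_less)

lemma strip_infinite_biosphere:
  assumes "1 \<le> k" shows "infinite_biosphere (strip_V k) (strip_E k) strip_t"
  unfolding infinite_biosphere_def
proof (intro conjI allI ballI)
  fix r :: real
  have "{v \<in> strip_V k. strip_t v < r} \<subseteq> {w \<in> strip_V k. fst w < nat \<lceil>r\<rceil>}"
    by (auto simp: strip_t_def) linarith
  then show "finite {v \<in> strip_V k. strip_t v < r}"
    using finite_strip_rows finite_subset by blast
next
  fix v
  have "{w. strip_E k v w} \<subseteq> {w \<in> strip_V k. fst w < fst v + 2}"
    by (auto simp: strip_E_def)
  then show "finite {w. strip_E k v w}"
    using finite_strip_rows finite_subset by blast
qed (auto simp: strip_E_def strip_t_def infinite_strip_V[OF assms])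

lemma strip_parentless_iff:
  assumes "r \<in> strip_V k" shows "(\<nexists>u. strip_E k u r) \<longleftrightarrow> fst r = 1"
proof
  assume "\<nexists>u. strip_E k u r"
  moreover have "strip_E k (fst r - 1, snd r) r" if "fst r \<noteq> 1"
    using assms that by (auto simp: strip_E_def strip_V_def)
  ultimately show "fst r = 1" by blast
qed (auto simp: strip_E_def strip_V_def)

lemma strip_parentless_eq_first_row:
  "{r \<in> strip_V k. \<nexists>u. strip_E k u r} = Pair 1 ` {1..k}"
proof -
  have "{r \<in> strip_V k. \<nexists>u. strip_E k u r} = {r \<in> strip_V k. fst r = 1}"
    by (intro Collect_cong conj_cong refl) (rule strip_parentless_iff)
  also have "\<dots> = Pair 1 ` {1..k}"
    by (auto simp: strip_V_def)
  finally show ?thesis .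
qed

theorem mainTheorem13:
  fixes k :: nat
  assumes "k \<ge> 1"
  defines "S \<equiv> (\<lambda>l::nat. insert (1, l) (desc (strip_E k) (1, l)))"
  shows "infinite_biosphere (strip_V k) (strip_E k) strip_t
    \<and> {T. maximal_set (strip_V k) (strip_E k) T} = S ` {1..k}
    \<and> card (S ` {1..k}) = k
    \<and> (\<forall>l \<in> {1..k}. \<forall>m \<in> {1..k}. sim (strip_E k) (S l) (S m))"
proof -
  interpret cofinite_desc_graph "strip_V k" "strip_E k"
    using strip_cofinite_desc_graph assms(1) .
  have S_eq: "S = cone (strip_E k) \<circ> Pair 1"
    by (simp add: S_def cone_def fun_eq_iff)
  have "{T. maximal_set (strip_V k) (strip_E k) T}
      = cone (strip_E k) ` {r \<in> strip_V k. \<nexists>u. strip_E k u r}"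
    unfolding maximal_set_iff_cone_of_parentless by blast
  also have "\<dots> = S ` {1..k}"
    by (simp only: strip_parentless_eq_first_row S_eq image_comp)
  moreover have "card (S ` {1..k}) = k"
    using inj_cone by (simp add: S_eq card_image inj_on_def)
  moreover have "sim (strip_E k) (S l) (S m)" if "l \<in> {1..k}" "m \<in> {1..k}" for l m
    using sim_cone that by (simp add: S_eq strip_V_def)
  ultimately show ?thesis
    using strip_infinite_biosphere[OF assms(1)] by simp
qed

end
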